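(* Let $w,v\in\mathbb{C}$ and put $\tilde p(z)=w(1-e^z)+z$. As real $n\to\infty$, \begin{align*} S_n(w;v)&=(n+v)\int_{-2}^{0}e^{n\tilde p(z)}e^{vz}\,dz+O\!\left(e^{-n/2}\right)\qquad(\mathrm{Re}(w)\leq1),\\ T_n(w;v)&=(n+v)\int_{0}^{2}e^{n\tilde p(z)}e^{vz}\,dz+O\!\left(e^{-n/2}\right)\qquad(\mathrm{Re}(w)\geq1), \end{align*} with implied constants depending only on $w$ and $v$.
   Context: Principal logarithm branch (arguments in $(-\pi,\pi]$); $(nw)^{-(n+v)}=e^{-(n+v)\log n}e^{-(n+v)\log w}$, $z^{n+v}=e^{(n+v)\log z}$ for $z>0$. For real $n>0$ with $\mathrm{Re}(n+v)>-1$: $S_n(w;v)=1+nw\int_0^1 e^{nw(1-z)}z^{n+v}\,dz$ and, for $w\neq0$, $T_n(w;v)=e^{nw}(nw)^{-(n+v)}\Gamma(n+v+1)-S_n(w;v)$. *)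

theory Defs
  imports "HOL-Analysis.Analysis"
begin

text \<open>Principal branch: z^(n+v) = exp((n+v) ln z) for real z > 0 (the value at z = 0 is
  irrelevant for the integral). Meaningful for real n > 0 with Re(n+v) > -1.\<close>
definition S_fun :: "real \<Rightarrow> complex \<Rightarrow> complex \<Rightarrow> complex" where
  "S_fun n w v = 1 + of_real n * w *
     integral {0..1} (\<lambda>z::real. exp (of_real n * w * of_real (1 - z)) *
                                 exp ((of_real n + v) * of_real (ln z)))"

text \<open>(nw)^{-(n+v)} = exp(-(n+v) log n) exp(-(n+v) Log w), principal Log (Ln); w \<noteq> 0.\<close>
definition T_fun :: "real \<Rightarrow> complex \<Rightarrow> complex \<Rightarrow> complex" where
  "T_fun n w v = exp (of_real n * w) * exp (- (of_real n + v) * of_real (ln n))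
                 * exp (- (of_real n + v) * Ln w) * Gamma (of_real n + v + 1) - S_fun n w v"

definition ptilde :: "complex \<Rightarrow> complex \<Rightarrow> complex" where
  "ptilde w z = w * (1 - exp z) + z"

end

theory Submission
  imports Defs "HOL-Complex_Analysis.Complex_Analysis"
begin

text \<open>With \<open>t = e^z\<close> the integrand \<open>e^(n w (1 - t)) t^(n + v)\<close> of \<open>S_n\<close> becomes
  \<open>e^(n p(z) + v z)\<close>, \<open>p = ptilde w\<close>, and \<open>(n + v - n w e^z) e^(n p(z) + v z)\<close> is the derivative
  of the latter. Hence \<open>(n + v)\<close> times its integral over \<open>[x, y]\<close> is \<open>n w\<close> times the \<open>S_n\<close>-integral
  over \<open>[e^x, e^y]\<close> plus boundary terms. For \<open>S_n\<close> with \<open>Re w \<le> 1\<close> what remains is the integral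
  over \<open>[0, e^-2]\<close> and the boundary term at \<open>z = -2\<close>, both \<open>O(n e^-n)\<close>.
  For \<open>T_n\<close> with \<open>Re w \<ge> 1\<close>, the substitution \<open>\<zeta> = n w t\<close> turns the \<open>S_n\<close>-integral over
  \<open>[0, e^2]\<close> into the Gamma integral along \<open>[0, P]\<close>, \<open>P = n w e^2\<close>, times the prefactor
  \<open>e^(n w) (n w)^-(n + v)\<close> of \<open>T_n\<close>. Cauchy's theorem on the triangle \<open>0, |P|, P\<close> moves it onto
  \<open>[0, |P|]\<close> at the cost of the segment \<open>[|P|, P]\<close>, on which \<open>|e^-\<zeta>| \<le> e^-Re P\<close>. Against the
  prefactor, both this segment and the Gamma tail beyond \<open>|P|\<close> are \<open>O(n e^-n)\<close>.\<close>

text \<open>Using \<open>powr\<close> instead of \<open>exp \<circ> ln\<close> makes the integrand continuous at \<open>t = 0\<close>;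
  it differs from the integrand in \<open>S_fun\<close> only there.\<close>
definition S_integrand :: "real \<Rightarrow> complex \<Rightarrow> complex \<Rightarrow> real \<Rightarrow> complex" where
  "S_integrand n w v t = exp (of_real n * w * of_real (1 - t)) * of_real t powr (of_real n + v)"

definition ptilde_integrand :: "real \<Rightarrow> complex \<Rightarrow> complex \<Rightarrow> real \<Rightarrow> complex" where
  "ptilde_integrand n w v z = exp (of_real n * ptilde w (of_real z)) * exp (v * of_real z)"

definition T_prefactor :: "real \<Rightarrow> complex \<Rightarrow> complex \<Rightarrow> complex" where
  "T_prefactor n w v =
     exp (of_real n * w) * exp (- (of_real n + v) * of_real (ln n)) * exp (- (of_real n + v) * Ln w)"

lemma T_fun_eq: "T_fun n w v = T_prefactor n w v * Gamma (of_real n + v + 1) - S_fun n w v"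
  by (simp add: T_fun_def T_prefactor_def)

lemma ptilde_integrand_eq_S_integrand_exp: "ptilde_integrand n w v z = S_integrand n w v (exp z)"
proof -
  have "of_real (exp z) powr (of_real n + v) = exp ((of_real n + v) * of_real z)"
    by (simp add: powr_def Ln_of_real)
  then show ?thesis
    unfolding ptilde_integrand_def S_integrand_def ptilde_def
    by (simp add: exp_add[symmetric] algebra_simps exp_of_real)
qed

lemma ptilde_integrand_0 [simp]: "ptilde_integrand n w v 0 = 1"
  by (simp add: ptilde_integrand_def ptilde_def)

lemma norm_S_integrand:
  "t \<ge> 0 \<Longrightarrow> norm (S_integrand n w v t) = exp (n * (1 - t) * Re w) * t powr (n + Re v)"
  unfolding S_integrand_def by (simp add: norm_mult norm_powr_complex)

lemma norm_ptilde_integrand: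
  "norm (ptilde_integrand n w v z) = exp (n * (Re w * (1 - exp z) + z) + Re v * z)"
  unfolding ptilde_integrand_def ptilde_def
  by (simp add: norm_mult exp_add[symmetric] exp_of_real del: of_real_exp)

lemma continuous_on_S_integrand:
  "S \<subseteq> {0..} \<Longrightarrow> n + Re v > 0 \<Longrightarrow> continuous_on S (S_integrand n w v)"
  unfolding S_integrand_def by (intro continuous_intros continuous_on_powr_complex) auto

lemma continuous_on_ptilde_integrand: "continuous_on S (ptilde_integrand n w v)"
  unfolding ptilde_integrand_def ptilde_def by (intro continuous_intros)

lemma has_vector_derivative_ptilde_integrand:
  "(ptilde_integrand n w v has_vector_derivative
      ((of_real n + v - of_real n * w * exp (of_real z)) * ptilde_integrand n w v z)) (at z within S)"
proof -
  have eq: "ptilde_integrand n w v =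
      (\<lambda>z. exp (of_real n * (w * (1 - exp (of_real z)) + of_real z) + v * of_real z))"
    by (auto simp: ptilde_integrand_def ptilde_def exp_add fun_eq_iff)
  have "((\<lambda>\<zeta>. exp (of_real n * (w * (1 - exp \<zeta>) + \<zeta>) + v * \<zeta>)) has_field_derivative
          ((of_real n + v - of_real n * w * exp (of_real z)) * ptilde_integrand n w v z)) (at (of_real z))"
    by (rule derivative_eq_intros refl)+ (simp add: eq algebra_simps)
  from has_vector_derivative_real_field[OF this] show ?thesis unfolding eq .
qed

lemma integral_ptilde_integrand_eq_integral_S_integrand:
  assumes "x \<le> y" and "n + Re v > 0"
  shows "(of_real n + v) * integral {x..y} (ptilde_integrand n w v) =
         of_real n * w * integral {exp x..exp y} (S_integrand n w v)
         + ptilde_integrand n w v y - ptilde_integrand n w v x"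
proof -
  let ?g = "ptilde_integrand n w v"
  define I where "I = integral {exp x..exp y} (S_integrand n w v)"
  have subst: "((\<lambda>z. exp z *\<^sub>R S_integrand n w v (exp z)) has_integral I) {x..y}"
    unfolding I_def
    by (rule has_integral_substitution[where c="exp x" and d="exp y"])
       (use assms in \<open>auto intro!: continuous_on_S_integrand derivative_eq_intros
          order_trans[OF less_imp_le[OF exp_gt_zero]]\<close>)
  have ftc: "((\<lambda>z. (of_real n + v - of_real n * w * exp (of_real z)) * ?g z)
               has_integral (?g y - ?g x)) {x..y}"
    by (rule fundamental_theorem_of_calculus[OF assms(1)])
       (rule has_vector_derivative_ptilde_integrand)
  have "((\<lambda>z. (of_real n + v - of_real n * w * exp (of_real z)) * ?g z
              + of_real n * w * (exp z *\<^sub>R S_integrand n w v (exp z)))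
         has_integral (?g y - ?g x + of_real n * w * I)) {x..y}"
    by (intro has_integral_add ftc has_integral_mult_right subst)
  then have "((\<lambda>z. (of_real n + v) * ?g z) has_integral (?g y - ?g x + of_real n * w * I)) {x..y}"
    by (simp add: ptilde_integrand_eq_S_integrand_exp scaleR_conv_of_real algebra_simps exp_of_real)
  moreover have "((\<lambda>z. (of_real n + v) * ?g z) has_integral
                   ((of_real n + v) * integral {x..y} ?g)) {x..y}"
    by (intro has_integral_mult_right integrable_integral integrable_continuous_interval
          continuous_on_ptilde_integrand)
  ultimately show ?thesis
    unfolding I_def by (metis has_integral_unique add.commute add_diff_eq)
qed

lemma S_fun_eq_integral_S_integrand:
  "S_fun n w v = 1 + of_real n * w * integral {0..1} (S_integrand n w v)"
proof -
  have "integral {0..1} (\<lambda>t::real. exp (of_real n * w * of_real (1 - t)) *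
                                   exp ((of_real n + v) * of_real (ln t)))
        = integral {0..1} (S_integrand n w v)"
    by (rule integral_spike[of "{0}"]) (auto simp: S_integrand_def powr_def Ln_of_real)
  then show ?thesis unfolding S_fun_def by simp
qed

lemma S_fun_eq_split:
  assumes "n + Re v > 0"
  shows "S_fun n w v = of_real n * w * integral {0..exp (-2)} (S_integrand n w v)
          + (of_real n + v) * integral {-2..0} (ptilde_integrand n w v) + ptilde_integrand n w v (-2)"
proof -
  have "integral {0..1} (S_integrand n w v) =
        integral {0..exp (-2)} (S_integrand n w v) + integral {exp (-2)..1} (S_integrand n w v)"
    by (rule Henstock_Kurzweil_Integration.integral_combine[symmetric])
       (use assms in \<open>auto intro!: integrable_continuous_interval continuous_on_S_integrand\<close>)
  then show ?thesis
    using integral_ptilde_integrand_eq_integral_S_integrand[of "-2" 0 n v w] assms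
    by (simp add: S_fun_eq_integral_S_integrand algebra_simps)
qed

lemma mult_exp_minus_le: "(x::real) \<ge> 0 \<Longrightarrow> x * exp (- x) \<le> 2 * exp (- x / 2)"
proof -
  assume "x \<ge> 0"
  have "x \<le> 2 * exp (x / 2)" using exp_ge_add_one_self[of "x / 2"] by linarith
  then have "x * exp (- x) \<le> 2 * exp (x / 2) * exp (- x)" by (intro mult_right_mono) auto
  also have "\<dots> = 2 * exp (- x / 2)" by (simp add: mult.assoc exp_add[symmetric])
  finally show ?thesis .
qed

lemma norm_integral_S_integrand_head_le:
  assumes "n > 0" "n + Re v > 0" "Re w \<le> 1"
  shows "norm (integral {0..exp (-2)} (S_integrand n w v)) \<le> exp (- n) * exp (- 2 * Re v)"
proof -
  have bound: "norm (S_integrand n w v t) \<le> exp (- n - 2 * Re v)" if t: "t \<in> {0..exp (-2)}" for t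
  proof -
    have "t \<le> 1" using t by (auto intro: order_trans[of t "exp (-2)" 1])
    then have "n * (1 - t) * Re w \<le> n * (1 - t) * 1"
      using assms by (intro mult_left_mono) auto
    also have "\<dots> \<le> n" using t assms by (auto simp: algebra_simps)
    finally have "exp (n * (1 - t) * Re w) \<le> exp n" by simp
    moreover have "t powr (n + Re v) \<le> exp (-2) powr (n + Re v)"
      using t assms by (intro powr_mono2) auto
    ultimately have "norm (S_integrand n w v t) \<le> exp n * exp (-2) powr (n + Re v)"
      using t by (simp add: norm_S_integrand mult_mono)
    also have "\<dots> = exp (- n - 2 * Re v)"
      by (simp add: powr_def exp_add[symmetric] algebra_simps)
    finally show ?thesis .
  qed
  have "norm (integral {0..exp (-2)} (S_integrand n w v)) \<le> exp (- n - 2 * Re v) * (exp (-2) - 0)"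
    by (rule integral_bound) (use bound assms in \<open>auto intro!: continuous_on_S_integrand\<close>)
  also have "\<dots> \<le> exp (- n - 2 * Re v)" by (simp add: mult_left_le)
  finally show ?thesis by (simp add: exp_add[symmetric] algebra_simps)
qed

lemma norm_ptilde_integrand_minus2_le:
  assumes "n > 0" "Re w \<le> 1"
  shows "norm (ptilde_integrand n w v (-2)) \<le> exp (- 2 * Re v) * exp (- n / 2)"
proof -
  have "n * (Re w * (1 - exp (-2)) - 2) \<le> n * (1 * (1 - exp (-2)) - 2)"
    using assms by (intro mult_left_mono diff_right_mono mult_right_mono) auto
  also have "\<dots> = - n - n * exp (-2)" by (simp add: algebra_simps)
  also have "\<dots> \<le> - n / 2" using assms(1) mult_pos_pos[OF assms(1) exp_gt_zero[of "-2"]] by linarith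
  finally show ?thesis
    by (simp add: norm_ptilde_integrand exp_add[symmetric] algebra_simps)
qed

lemma S_fun_remainder_le:
  assumes "n > 0" "n + Re v > 0" "Re w \<le> 1"
  shows "norm (S_fun n w v - (of_real n + v) * integral {-2..0} (ptilde_integrand n w v))
         \<le> (2 * norm w + 1) * exp (- 2 * Re v) * exp (- n / 2)"
proof -
  have "norm (of_real n * w * integral {0..exp (-2)} (S_integrand n w v))
        \<le> norm w * exp (- 2 * Re v) * (n * exp (- n))"
    using norm_integral_S_integrand_head_le[OF assms] assms
    by (simp add: norm_mult mult_left_mono algebra_simps)
  also have "\<dots> \<le> norm w * exp (- 2 * Re v) * (2 * exp (- n / 2))"
    using assms by (intro mult_left_mono mult_exp_minus_le) auto
  finally have head: "norm (of_real n * w * integral {0..exp (-2)} (S_integrand n w v))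
      \<le> 2 * norm w * exp (- 2 * Re v) * exp (- n / 2)" by (simp add: algebra_simps)
  have "norm (S_fun n w v - (of_real n + v) * integral {-2..0} (ptilde_integrand n w v))
     \<le> norm (of_real n * w * integral {0..exp (-2)} (S_integrand n w v))
       + norm (ptilde_integrand n w v (-2))"
    using S_fun_eq_split[OF assms(2)] by (simp add: norm_triangle_ineq)
  also have "\<dots> \<le> (2 * norm w + 1) * exp (- 2 * Re v) * exp (- n / 2)"
    using add_mono[OF head norm_ptilde_integrand_minus2_le[OF assms(1,3)]]
    by (simp add: algebra_simps)
  finally show ?thesis .
qed

lemma powr_div_exp_le:
  fixes R t \<alpha> :: real
  assumes "R > 0" "0 \<le> \<alpha>" "2 * \<alpha> \<le> R" "R \<le> t"
  shows "t powr \<alpha> / exp t \<le> R powr \<alpha> * exp (- R / 2) * exp (- t / 2)"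
proof -
  have t: "t > 0" using assms by simp
  have "ln (t / R) \<le> t / R - 1" using t assms by (intro ln_le_minus_one) auto
  then have "\<alpha> * (ln t - ln R) \<le> \<alpha> * ((t - R) / R)"
    using t assms by (intro mult_left_mono) (auto simp: ln_div diff_divide_distrib)
  also have "\<dots> = (\<alpha> / R) * (t - R)" by simp
  also have "\<dots> \<le> (1 / 2) * (t - R)" using assms by (intro mult_right_mono) (auto simp: field_simps)
  finally have "\<alpha> * ln t - t \<le> \<alpha> * ln R - R / 2 - t / 2" by (simp add: algebra_simps)
  then have "exp (\<alpha> * ln t - t) \<le> exp (\<alpha> * ln R - R / 2 - t / 2)" by simp
  then show ?thesis
    using t assms by (simp add: powr_def exp_diff mult_exp_exp algebra_simps)
qed

lemma norm_Gamma_minus_integral_le: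
  fixes a :: complex and R :: real
  assumes "Re a \<ge> 0" "R > 0" "2 * Re a \<le> R"
  shows "norm (Gamma (a + 1) - integral {0..R} (\<lambda>t. of_real t powr a / of_real (exp t)))
         \<le> 2 * R powr Re a * exp (- R)"
proof -
  define G where "G = (\<lambda>t::real. of_real t powr a / of_real (exp t) :: complex)"
  define B where "B = (\<lambda>t. R powr Re a * exp (- R / 2) * exp (- (1 / 2) * t))"
  have Gamma: "(G has_integral Gamma (a + 1)) {0..}"
    using Gamma_integral_complex[of "a + 1"] assms unfolding G_def by simp
  have "(G has_integral integral {0..R} G) {0..R}"
    using Gamma by (intro integrable_integral integrable_on_subinterval[of _ "{0..}"]) auto
  then have "((\<lambda>t. if t \<in> {0..R} then G t else 0) has_integral integral {0..R} G) {0..}"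
    using assms by (subst has_integral_restrict) auto
  from has_integral_diff[OF Gamma this]
  have "((\<lambda>t. if t \<in> {R<..} then G t else 0) has_integral (Gamma (a + 1) - integral {0..R} G)) {0..}"
    by (rule has_integral_eq[rotated]) (use assms in auto)
  then have tail: "(G has_integral (Gamma (a + 1) - integral {0..R} G)) {R<..}"
    using assms by (subst (asm) has_integral_restrict) auto
  have "(B has_integral (R powr Re a * exp (- R / 2) * (exp (- (1 / 2) * R) / (1 / 2)))) {R..}"
    unfolding B_def by (intro has_integral_mult_right has_integral_exp_minus_to_infinity) auto
  moreover have "exp (- R / 2) * exp (- (1 / 2) * R) = exp (- R)"
    by (simp flip: exp_add)
  ultimately have "(B has_integral 2 * R powr Re a * exp (- R)) {R..}"
    by (simp add: field_simps)
  then have B: "(B has_integral 2 * R powr Re a * exp (- R)) {R<..}"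
    by (rule has_integral_spike_set_eq[THEN iffD1, rotated 2])
       (auto intro: negligible_subset[of "{R}"])
  have "norm (integral {R<..} G) \<le> integral {R<..} B"
  proof (rule integral_norm_bound_integral)
    show "G integrable_on {R<..}" "B integrable_on {R<..}" using tail B by blast+
    fix t assume t: "t \<in> {R<..}"
    then have "norm (G t) = t powr Re a / exp t"
      using assms by (simp add: G_def norm_divide norm_powr_complex)
    also have "\<dots> \<le> B t" using powr_div_exp_le[of R "Re a" t] t assms by (simp add: B_def)
    finally show "norm (G t) \<le> B t" .
  qed
  then show ?thesis
    using integral_unique[OF tail] integral_unique[OF B] by (simp add: G_def)
qed

lemma continuous_on_powr_exp_halfplane:
  "Re a > 0 \<Longrightarrow> continuous_on {\<zeta>. Re \<zeta> \<ge> 0} (\<lambda>\<zeta>::complex. \<zeta> powr a * exp (- \<zeta>))"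
  by (intro continuous_intros continuous_on_powr_complex[of _ "\<lambda>z. z" "\<lambda>_. a"]) auto

lemma field_differentiable_powr_exp:
  assumes "x \<notin> \<real>\<^sub>\<le>\<^sub>0"
  shows "(\<lambda>\<zeta>::complex. \<zeta> powr a * exp (- \<zeta>)) field_differentiable at x"
proof -
  have "((\<lambda>\<zeta>. \<zeta> powr a) has_field_derivative (a * x powr (a - 1))) (at x)"
    using assms by (rule has_field_derivative_powr)
  moreover have "((\<lambda>\<zeta>. exp (- \<zeta>)) has_field_derivative (- exp (- x))) (at x)"
    by (auto intro!: derivative_eq_intros)
  ultimately show ?thesis
    unfolding field_differentiable_def by (intro exI) (rule DERIV_mult)
qed

lemma contour_integral_powr_exp_rotate:
  fixes a P :: complex
  assumes "Re a > 0" "Re P > 0"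
  defines "h \<equiv> \<lambda>\<zeta>::complex. \<zeta> powr a * exp (- \<zeta>)"
  shows "contour_integral (linepath 0 P) h =
         integral {0..norm P} (\<lambda>t. of_real t powr a / of_real (exp t))
         + contour_integral (linepath (of_real (norm P)) P) h"
proof -
  define R where "R = norm P"
  have R: "R > 0" "Re P \<le> R"
    using assms complex_Re_le_cmod[of P] by (auto simp: R_def)
  have hull: "convex hull {0, of_real R, P} \<subseteq> {\<zeta>. Re \<zeta> \<ge> 0}"
    by (rule hull_minimal) (use assms R convex_halfspace_Re_ge[of 0] in auto)
  have cont: "continuous_on (convex hull {0, of_real R, P}) h"
    using continuous_on_subset[OF continuous_on_powr_exp_halfplane hull] assms by (simp add: h_def)
  have cont_segment: "continuous_on (closed_segment x y) h"
    if "x \<in> {0, of_real R, P}" "y \<in> {0, of_real R, P}" for x y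
    using that by (intro continuous_on_subset[OF cont] closed_segment_subset hull_subset[THEN subsetD]
        convex_convex_hull) auto
  have "(h has_contour_integral 0) (linepath 0 (of_real R) +++ linepath (of_real R) P +++ linepath P 0)"
  proof (rule Cauchy_theorem_triangle_cofinite[OF cont, of "{0}"])
    fix x assume "x \<in> interior (convex hull {0, of_real R, P}) - {0}"
    then have "x \<noteq> 0" "Re x \<ge> 0" using hull interior_subset by auto
    then have "x \<notin> \<real>\<^sub>\<le>\<^sub>0" by (auto simp: complex_nonpos_Reals_iff complex_eq_iff)
    then show "h field_differentiable at x"
      unfolding h_def by (rule field_differentiable_powr_exp)
  qed auto
  then have "contour_integral (linepath 0 (of_real R)) h + contour_integral (linepath (of_real R) P) h
             - contour_integral (linepath 0 P) h = 0"
    using contour_integral_reverse_linepath[OF cont_segment, of 0 P]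
    by (auto dest!: contour_integral_unique
        simp: contour_integrable_joinI contour_integrable_continuous_linepath cont_segment add.assoc)
  moreover have "(h has_contour_integral contour_integral (linepath 0 (of_real R)) h)
                   (linepath 0 (of_real R))"
    by (intro has_contour_integral_integral contour_integrable_continuous_linepath cont_segment) auto
  then have "((\<lambda>t. h (of_real t)) has_integral contour_integral (linepath 0 (of_real R)) h) {0..R}"
    using has_contour_integral_linepath_Reals_iff[of 0 "of_real R" h] R by simp
  moreover have "(\<lambda>t. h (of_real t)) = (\<lambda>t. of_real t powr a / of_real (exp t))"
    by (auto simp: h_def fun_eq_iff exp_minus divide_inverse exp_of_real)
  ultimately show ?thesis
    unfolding R_def by (metis integral_unique add_diff_cancel_left' diff_add_cancel eq_iff_diff_eq_0)
qed

lemma mult_le_abs_mult_if_abs_le: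
  fixes x y c :: real
  assumes "\<bar>y\<bar> \<le> c"
  shows "x * y \<le> \<bar>x\<bar> * c"
proof -
  have "x * y \<le> \<bar>x\<bar> * \<bar>y\<bar>" by (simp flip: abs_mult)
  also have "\<dots> \<le> \<bar>x\<bar> * c" using assms by (simp add: mult_left_mono)
  finally show ?thesis .
qed

lemma norm_contour_integral_powr_exp_segment_le:
  fixes a P :: complex
  assumes "Re a > 0" "Re P > 0"
  shows "norm (contour_integral (linepath (of_real (norm P)) P) (\<lambda>\<zeta>. \<zeta> powr a * exp (- \<zeta>)))
         \<le> norm P powr Re a * exp (\<bar>Im a\<bar> * pi) * exp (- Re P) * norm (P - of_real (norm P))"
proof (rule has_contour_integral_bound_linepath)
  have Re_P: "Re P \<le> norm P" by (rule complex_Re_le_cmod)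
  have "closed_segment (of_real (norm P)) P \<subseteq> {\<zeta>. Re \<zeta> \<ge> 0}"
    using assms Re_P by (intro closed_segment_subset convex_halfspace_Re_ge) auto
  then show "((\<lambda>\<zeta>. \<zeta> powr a * exp (- \<zeta>)) has_contour_integral
               contour_integral (linepath (of_real (norm P)) P) (\<lambda>\<zeta>. \<zeta> powr a * exp (- \<zeta>)))
             (linepath (of_real (norm P)) P)"
    using assms
    by (intro has_contour_integral_integral contour_integrable_continuous_linepath
          continuous_on_subset[OF continuous_on_powr_exp_halfplane])
  fix \<zeta> assume \<zeta>: "\<zeta> \<in> closed_segment (of_real (norm P)) P"
  have "closed_segment (of_real (norm P)) P \<subseteq> cball 0 (norm P) \<inter> {\<zeta>. Re \<zeta> \<ge> Re P}"
    using Re_P by (intro closed_segment_subset convex_Int convex_cball convex_halfspace_Re_ge) auto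
  with \<zeta> have norm_\<zeta>: "norm \<zeta> \<le> norm P" and Re_\<zeta>: "Re P \<le> Re \<zeta>" by auto
  have "- Im a * Arg \<zeta> \<le> \<bar>Im a\<bar> * pi"
    using mult_le_abs_mult_if_abs_le[of "Arg \<zeta>" pi "- Im a"] Arg_bounded[of \<zeta>] by auto
  then show "norm (\<zeta> powr a * exp (- \<zeta>)) \<le> norm P powr Re a * exp (\<bar>Im a\<bar> * pi) * exp (- Re P)"
    unfolding norm_mult norm_powr_complex norm_exp_eq_Re
    using norm_\<zeta> Re_\<zeta> assms by (intro mult_mono powr_mono2) auto
qed simp

lemma T_prefactor_mult_powr:
  assumes "n > 0" "w \<noteq> 0" "\<Delta> > 0"
  shows "T_prefactor n w v * (of_real (n * \<Delta>) * w) powr (of_real n + v)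
         = exp (of_real n * w) * of_real \<Delta> powr (of_real n + v)"
proof -
  have "Ln (of_real (n * \<Delta>) * w) = of_real (ln (n * \<Delta>)) + Ln w"
    using Ln_times_of_real[of "n * \<Delta>" w] Ln_of_real[of "n * \<Delta>"] assms by simp
  moreover have "ln (n * \<Delta>) = ln n + ln \<Delta>" using assms by (simp add: ln_mult)
  ultimately show ?thesis
    using assms by (simp add: T_prefactor_def powr_def Ln_of_real exp_add[symmetric] algebra_simps)
qed

lemma integral_S_integrand_eq_contour_integral:
  assumes "n > 0" "w \<noteq> 0" "n + Re v > 0" "\<Delta> > 0"
  shows "of_real n * w * integral {0..\<Delta>} (S_integrand n w v) =
         T_prefactor n w v * contour_integral (linepath 0 (of_real (n * \<Delta>) * w))
                               (\<lambda>\<zeta>. \<zeta> powr (of_real n + v) * exp (- \<zeta>))"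
proof -
  define a where "a = of_real n + v"
  define P where "P = of_real (n * \<Delta>) * w"
  define K where "K = T_prefactor n w v"
  define h where "h = (\<lambda>\<zeta>::complex. \<zeta> powr a * exp (- \<zeta>))"
  have "((\<lambda>x. \<Delta> *\<^sub>R S_integrand n w v (\<Delta> * x)) has_integral integral {0..\<Delta>} (S_integrand n w v)) {0..1}"
    using has_integral_substitution[of 0 1 "\<lambda>x. \<Delta> * x" 0 \<Delta> "S_integrand n w v" "\<lambda>_. \<Delta>"] assms
      continuous_on_S_integrand[of "{0..\<Delta>}" n v w]
    by (auto intro!: derivative_eq_intros continuous_on_S_integrand)
  then have scaled: "((\<lambda>x. of_real n * w * (\<Delta> *\<^sub>R S_integrand n w v (\<Delta> * x)))
               has_integral of_real n * w * integral {0..\<Delta>} (S_integrand n w v)) {0..1}"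
    by (rule has_integral_mult_right)
  have pointwise: "K * (h (linepath 0 P x) * (P - 0)) = of_real n * w * (\<Delta> *\<^sub>R S_integrand n w v (\<Delta> * x))"
    if "x \<in> {0..1}" for x
  proof -
    have line: "linepath 0 P x = of_real x * P"
      by (simp add: linepath_def scaleR_conv_of_real)
    have powr_xP: "(of_real x * P) powr a = of_real x powr a * P powr a"
      using that by (intro powr_times_real_left) auto
    have powr_\<Delta>x: "(of_real (\<Delta> * x) :: complex) powr a = of_real \<Delta> powr a * of_real x powr a"
      using assms by (simp add: powr_times_real_left)
    have exp_split: "exp (of_real n * w * of_real (1 - \<Delta> * x)) = exp (of_real n * w) * exp (- (of_real x * P))"
      by (simp add: P_def exp_add[symmetric] algebra_simps)
    have "K * (h (linepath 0 P x) * (P - 0)) = (K * P powr a) * of_real x powr a * exp (- (of_real x * P)) * P"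
      unfolding line h_def powr_xP by (simp add: algebra_simps)
    also have "K * P powr a = exp (of_real n * w) * of_real \<Delta> powr a"
      unfolding K_def P_def a_def using assms by (intro T_prefactor_mult_powr) auto
    finally show ?thesis
      unfolding S_integrand_def powr_\<Delta>x[unfolded a_def] exp_split
      by (simp add: scaleR_conv_of_real P_def a_def algebra_simps)
  qed
  have "((\<lambda>x. K * (h (linepath 0 P x) * (P - 0)))
          has_integral of_real n * w * integral {0..\<Delta>} (S_integrand n w v)) {0..1}"
    by (rule has_integral_eq[OF pointwise[symmetric] scaled])
  moreover have "K \<noteq> 0" by (simp add: K_def T_prefactor_def)
  ultimately have "((\<lambda>x. h (linepath 0 P x) * (P - 0))
               has_integral of_real n * w * integral {0..\<Delta>} (S_integrand n w v) / K) {0..1}"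
    by (simp add: has_integral_mult_right_iff)
  then have "contour_integral (linepath 0 P) h = of_real n * w * integral {0..\<Delta>} (S_integrand n w v) / K"
    by (intro contour_integral_unique) (simp add: has_contour_integral_linepath)
  then show ?thesis by (simp add: K_def T_prefactor_def h_def P_def a_def)
qed

lemma T_fun_remainder_eq:
  assumes "n > 0" "Re w > 0" "n + Re v > 0"
  defines "P \<equiv> of_real (n * exp 2) * w"
  shows "T_fun n w v - (of_real n + v) * integral {0..2} (ptilde_integrand n w v) =
     T_prefactor n w v * (Gamma (of_real n + v + 1)
       - integral {0..norm P} (\<lambda>t. of_real t powr (of_real n + v) / of_real (exp t)))
     - T_prefactor n w v * contour_integral (linepath (of_real (norm P)) P)
         (\<lambda>\<zeta>. \<zeta> powr (of_real n + v) * exp (- \<zeta>))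
     - ptilde_integrand n w v 2"
proof -
  have "w \<noteq> 0" "Re P > 0" using assms by (auto simp: P_def)
  have split: "integral {0..exp 2} (S_integrand n w v) =
        integral {0..1} (S_integrand n w v) + integral {1..exp 2} (S_integrand n w v)"
    by (rule Henstock_Kurzweil_Integration.integral_combine[symmetric])
       (use assms in \<open>auto intro!: integrable_continuous_interval continuous_on_S_integrand\<close>)
  have substitution: "(of_real n + v) * integral {0..2} (ptilde_integrand n w v) =
         of_real n * w * integral {1..exp 2} (S_integrand n w v) + ptilde_integrand n w v 2 - 1"
    using integral_ptilde_integrand_eq_integral_S_integrand[of 0 2 n v w] assms by simp
  have ray: "of_real n * w * integral {0..exp 2} (S_integrand n w v) =
     T_prefactor n w v * (integral {0..norm P} (\<lambda>t. of_real t powr (of_real n + v) / of_real (exp t))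
       + contour_integral (linepath (of_real (norm P)) P) (\<lambda>\<zeta>. \<zeta> powr (of_real n + v) * exp (- \<zeta>)))"
    using integral_S_integrand_eq_contour_integral[of n w v "exp 2"]
      contour_integral_powr_exp_rotate[of "of_real n + v" P] assms \<open>w \<noteq> 0\<close> \<open>Re P > 0\<close>
    by (simp add: P_def)
  have "T_fun n w v - (of_real n + v) * integral {0..2} (ptilde_integrand n w v)
      = T_prefactor n w v * Gamma (of_real n + v + 1) - (1 + of_real n * w * integral {0..1} (S_integrand n w v))
        - (of_real n * w * integral {1..exp 2} (S_integrand n w v) + ptilde_integrand n w v 2 - 1)"
    by (simp only: T_fun_eq S_fun_eq_integral_S_integrand substitution)
  also have "\<dots> = T_prefactor n w v * Gamma (of_real n + v + 1)
        - of_real n * w * integral {0..exp 2} (S_integrand n w v) - ptilde_integrand n w v 2"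
    by (simp add: split algebra_simps)
  also have "\<dots> = T_prefactor n w v * (Gamma (of_real n + v + 1)
       - integral {0..norm P} (\<lambda>t. of_real t powr (of_real n + v) / of_real (exp t)))
     - T_prefactor n w v * contour_integral (linepath (of_real (norm P)) P)
         (\<lambda>\<zeta>. \<zeta> powr (of_real n + v) * exp (- \<zeta>))
     - ptilde_integrand n w v 2"
    unfolding ray by (simp add: algebra_simps)
  finally show ?thesis .
qed

lemma norm_T_prefactor_mult_powr_le:
  assumes "n > 0" "w \<noteq> 0"
  shows "norm (T_prefactor n w v) * (n * norm w * exp 2) powr (n + Re v)
         \<le> exp (n * Re w + 2 * (n + Re v) + \<bar>Im v\<bar> * pi)"
proof -
  have "Re ((of_real n + v) * Ln w) = (n + Re v) * ln (norm w) - Im v * Im (Ln w)"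
    using assms by simp
  then have "norm (T_prefactor n w v) * (n * norm w * exp 2) powr (n + Re v)
        = exp (n * Re w + 2 * (n + Re v) + Im v * Im (Ln w))"
    using assms
    by (simp add: T_prefactor_def norm_mult powr_def ln_mult mult_exp_exp algebra_simps)
  also have "\<dots> \<le> exp (n * Re w + 2 * (n + Re v) + \<bar>Im v\<bar> * pi)"
    using mult_le_abs_mult_if_abs_le[of "Im (Ln w)" pi "Im v"] mpi_less_Im_Ln[of w] Im_Ln_le_pi[of w]
      assms by auto
  finally show ?thesis .
qed

lemma four_le_exp_two: "4 \<le> exp (2::real)"
proof -
  have "2 * 2 \<le> exp 1 * exp (1::real)"
    using exp_ge_add_one_self[of 1] by (intro mult_mono) auto
  then show ?thesis by (simp add: mult_exp_exp)
qed

lemma exp_two_gap_le: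
  assumes "n \<ge> 0" "Re w \<ge> 1"
  shows "n * Re w - n * exp 2 * Re w \<le> - 3 * n"
proof -
  have "n * 1 * 3 \<le> n * Re w * (exp 2 - 1)"
    using assms four_le_exp_two by (intro mult_mono) auto
  then show ?thesis by (simp add: algebra_simps)
qed

lemma norm_T_prefactor_Gamma_tail_le:
  assumes n: "n > \<bar>Re v\<bar>" and w: "Re w \<ge> 1"
  defines "P \<equiv> of_real (n * exp 2) * w"
  shows "norm (T_prefactor n w v * (Gamma (of_real n + v + 1)
           - integral {0..norm P} (\<lambda>t. of_real t powr (of_real n + v) / of_real (exp t))))
         \<le> 2 * exp (2 * Re v + 2 * \<bar>Im v\<bar> * pi) * exp (- n / 2)"
proof -
  define R where "R = n * norm w * exp 2"
  have "n > 0" "n + Re v > 0" using n by auto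
  then have "norm P = R" by (simp add: P_def R_def norm_mult)
  have "norm w \<ge> 1" using w complex_Re_le_cmod[of w] by linarith
  then have "w \<noteq> 0" by auto
  have "n * 4 \<le> n * (norm w * exp 2)"
    using \<open>n > 0\<close> \<open>norm w \<ge> 1\<close> four_le_exp_two mult_mono[of 1 "norm w" 4 "exp 2"]
    by (intro mult_left_mono) auto
  then have "2 * (n + Re v) \<le> R"
    using n abs_ge_self[of "Re v"] by (simp add: R_def mult.assoc)
  have "n * exp 2 * Re w \<le> R"
    using \<open>n > 0\<close> complex_Re_le_cmod[of w] by (simp add: R_def mult_left_mono)
  have "0 \<le> \<bar>Im v\<bar> * pi" by simp
  have "norm (T_prefactor n w v * (Gamma (of_real n + v + 1)
          - integral {0..R} (\<lambda>t. of_real t powr (of_real n + v) / of_real (exp t))))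
        \<le> norm (T_prefactor n w v) * (2 * R powr (n + Re v) * exp (- R))"
    unfolding norm_mult using norm_Gamma_minus_integral_le[of "of_real n + v" R]
      \<open>n + Re v > 0\<close> \<open>2 * (n + Re v) \<le> R\<close> by (intro mult_left_mono) auto
  also have "\<dots> = 2 * (norm (T_prefactor n w v) * R powr (n + Re v)) * exp (- R)" by simp
  also have "\<dots> \<le> 2 * exp (n * Re w + 2 * (n + Re v) + \<bar>Im v\<bar> * pi) * exp (- R)"
    using norm_T_prefactor_mult_powr_le[of n w v] \<open>n > 0\<close> \<open>w \<noteq> 0\<close> by (simp add: R_def)
  also have "\<dots> \<le> 2 * exp (2 * Re v + 2 * \<bar>Im v\<bar> * pi) * exp (- n / 2)"
  proof -
    have "n * Re w + 2 * (n + Re v) + \<bar>Im v\<bar> * pi - R \<le> 2 * Re v + 2 * (\<bar>Im v\<bar> * pi) - n / 2"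
      using exp_two_gap_le[of n w] w \<open>n > 0\<close> \<open>n * exp 2 * Re w \<le> R\<close> \<open>0 \<le> \<bar>Im v\<bar> * pi\<close>
      by argo
    then show ?thesis by (simp add: mult_exp_exp mult.assoc)
  qed
  finally show ?thesis unfolding \<open>norm P = R\<close> .
qed

lemma norm_T_prefactor_segment_le:
  assumes n: "n > \<bar>Re v\<bar>" and w: "Re w \<ge> 1"
  defines "P \<equiv> of_real (n * exp 2) * w"
  shows "norm (T_prefactor n w v * contour_integral (linepath (of_real (norm P)) P)
                 (\<lambda>\<zeta>. \<zeta> powr (of_real n + v) * exp (- \<zeta>)))
         \<le> 4 * norm w * exp 2 * exp (2 * Re v + 2 * \<bar>Im v\<bar> * pi) * exp (- n / 2)"
proof -
  define R where "R = n * norm w * exp 2"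
  have "n > 0" "n + Re v > 0" using n by auto
  have "norm w \<ge> 1" using w complex_Re_le_cmod[of w] by linarith
  have "norm P = R" "Re P = n * exp 2 * Re w" using \<open>n > 0\<close> by (auto simp: P_def R_def norm_mult)
  have "Re P > 0" "R > 0" using \<open>Re P = n * exp 2 * Re w\<close> \<open>n > 0\<close> \<open>norm w \<ge> 1\<close> w
    by (auto simp: R_def intro!: mult_pos_pos)
  have "norm (contour_integral (linepath (of_real R) P) (\<lambda>\<zeta>. \<zeta> powr (of_real n + v) * exp (- \<zeta>)))
        \<le> R powr (n + Re v) * exp (\<bar>Im v\<bar> * pi) * exp (- Re P) * norm (P - of_real R)"
    using norm_contour_integral_powr_exp_segment_le[of "of_real n + v" P, unfolded \<open>norm P = R\<close>]
      \<open>n + Re v > 0\<close> \<open>Re P > 0\<close> by simp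
  also have "\<dots> \<le> R powr (n + Re v) * exp (\<bar>Im v\<bar> * pi) * exp (- Re P) * (2 * R)"
    using norm_triangle_ineq4[of P "of_real R"] \<open>norm P = R\<close> by (intro mult_left_mono) auto
  finally have "norm (T_prefactor n w v * contour_integral (linepath (of_real R) P)
                  (\<lambda>\<zeta>. \<zeta> powr (of_real n + v) * exp (- \<zeta>)))
        \<le> norm (T_prefactor n w v) * (R powr (n + Re v) * exp (\<bar>Im v\<bar> * pi) * exp (- Re P) * (2 * R))"
    unfolding norm_mult by (rule mult_left_mono) simp
  also have "\<dots> = 2 * R * (norm (T_prefactor n w v) * R powr (n + Re v)) * exp (\<bar>Im v\<bar> * pi - Re P)"
    by (simp add: exp_diff exp_minus field_simps)
  also have "\<dots> \<le> 2 * R * exp (n * Re w + 2 * (n + Re v) + \<bar>Im v\<bar> * pi) * exp (\<bar>Im v\<bar> * pi - Re P)"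
    unfolding R_def using \<open>n > 0\<close> \<open>norm w \<ge> 1\<close>
    by (intro mult_right_mono mult_left_mono norm_T_prefactor_mult_powr_le) auto
  also have "\<dots> \<le> 2 * R * (exp (2 * Re v + 2 * \<bar>Im v\<bar> * pi) * exp (- n))"
    using exp_two_gap_le[of n w] w \<open>Re P = n * exp 2 * Re w\<close> \<open>n > 0\<close> \<open>R > 0\<close>
    by (simp add: mult_exp_exp)
  also have "\<dots> = 2 * norm w * exp 2 * exp (2 * Re v + 2 * \<bar>Im v\<bar> * pi) * (n * exp (- n))"
    by (simp add: R_def)
  also have "\<dots> \<le> 2 * norm w * exp 2 * exp (2 * Re v + 2 * \<bar>Im v\<bar> * pi) * (2 * exp (- n / 2))"
    using \<open>n > 0\<close> by (intro mult_left_mono mult_exp_minus_le) auto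
  finally show ?thesis unfolding R_def[symmetric] \<open>norm P = R\<close> by simp
qed

lemma norm_ptilde_integrand_2_le:
  assumes "n > 0" "Re w \<ge> 1"
  shows "norm (ptilde_integrand n w v 2) \<le> exp (2 * Re v + 2 * \<bar>Im v\<bar> * pi) * exp (- n / 2)"
proof -
  have "norm (ptilde_integrand n w v 2) = exp (n * Re w - n * exp 2 * Re w + 2 * n + 2 * Re v)"
    by (simp add: norm_ptilde_integrand algebra_simps)
  also have "\<dots> \<le> exp (2 * Re v + 2 * (\<bar>Im v\<bar> * pi) - n / 2)"
    using exp_two_gap_le[of n w] assms mult_nonneg_nonneg[OF abs_ge_zero[of "Im v"] pi_ge_zero]
    by (simp only: exp_le_cancel_iff) argo
  finally show ?thesis by (simp add: mult_exp_exp mult.assoc)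
qed

lemma T_fun_remainder_le:
  assumes n: "n > \<bar>Re v\<bar>" and w: "Re w \<ge> 1"
  shows "norm (T_fun n w v - (of_real n + v) * integral {0..2} (ptilde_integrand n w v))
         \<le> (3 + 4 * norm w * exp 2) * exp (2 * Re v + 2 * \<bar>Im v\<bar> * pi) * exp (- n / 2)"
proof -
  define P where "P = of_real (n * exp 2) * w"
  have "n > 0" "n + Re v > 0" "Re w > 0" using n w by auto
  have "norm (T_fun n w v - (of_real n + v) * integral {0..2} (ptilde_integrand n w v))
     \<le> norm (T_prefactor n w v * (Gamma (of_real n + v + 1)
          - integral {0..norm P} (\<lambda>t. of_real t powr (of_real n + v) / of_real (exp t))))
       + norm (T_prefactor n w v * contour_integral (linepath (of_real (norm P)) P)
          (\<lambda>\<zeta>. \<zeta> powr (of_real n + v) * exp (- \<zeta>)))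
       + norm (ptilde_integrand n w v 2)"
    unfolding T_fun_remainder_eq[of n w v, folded P_def, OF \<open>n > 0\<close> \<open>Re w > 0\<close> \<open>n + Re v > 0\<close>]
    by (rule order_trans[OF norm_triangle_ineq4 add_right_mono[OF norm_triangle_ineq4]])
  also have "\<dots> \<le> 2 * exp (2 * Re v + 2 * \<bar>Im v\<bar> * pi) * exp (- n / 2)
       + 4 * norm w * exp 2 * exp (2 * Re v + 2 * \<bar>Im v\<bar> * pi) * exp (- n / 2)
       + exp (2 * Re v + 2 * \<bar>Im v\<bar> * pi) * exp (- n / 2)"
    unfolding P_def
    by (intro add_mono norm_T_prefactor_Gamma_tail_le norm_T_prefactor_segment_le
          norm_ptilde_integrand_2_le n w \<open>n > 0\<close>)
  finally show ?thesis by (simp add: algebra_simps)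
qed

theorem lemma6p1:
  fixes w v :: complex
  shows "(Re w \<le> 1 \<longrightarrow>
           (\<exists>C. \<forall>\<^sub>F n in at_top.
              cmod (S_fun n w v - (of_real n + v) *
                 integral {-2..0} (\<lambda>z::real. exp (of_real n * ptilde w (of_real z)) * exp (v * of_real z)))
              \<le> C * exp (- n / 2)))
       \<and> (Re w \<ge> 1 \<longrightarrow>
           (\<exists>C. \<forall>\<^sub>F n in at_top.
              cmod (T_fun n w v - (of_real n + v) *
                 integral {0..2} (\<lambda>z::real. exp (of_real n * ptilde w (of_real z)) * exp (v * of_real z)))
              \<le> C * exp (- n / 2)))"
proof -
  have large: "\<forall>\<^sub>F n in at_top. n > \<bar>Re v\<bar>" by (rule eventually_gt_at_top)
  have "\<forall>\<^sub>F n in at_top. norm (S_fun n w v - (of_real n + v) * integral {-2..0} (ptilde_integrand n w v))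
          \<le> (2 * norm w + 1) * exp (- 2 * Re v) * exp (- n / 2)" if "Re w \<le> 1"
    using large by eventually_elim (rule S_fun_remainder_le; use that in arith)
  moreover have "\<forall>\<^sub>F n in at_top. norm (T_fun n w v - (of_real n + v) * integral {0..2} (ptilde_integrand n w v))
          \<le> (3 + 4 * norm w * exp 2) * exp (2 * Re v + 2 * \<bar>Im v\<bar> * pi) * exp (- n / 2)" if "Re w \<ge> 1"
    using large by eventually_elim (rule T_fun_remainder_le; use that in arith)
  ultimately show ?thesis unfolding ptilde_integrand_def by blast
qed

end
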